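(* Let $n\ge 4$ and let $x,y$ be pyramidal tours in $K_n$. The vertices $x^{v}$ and $y^{v}$ of $\mathrm{PYR}(n)$ are not adjacent (i.e. the segment $[x^v,y^v]$ is not an edge, one-dimensional face, of $\mathrm{PYR}(n)$) if and only if there exists a pyramidal tour $z\in PT_n$, different from both $x$ and $y$, all of whose edges are edges of $x$ or of $y$.
   Context: Let $K_n$ be the complete undirected graph on vertex set $\{1,\dots,n\}$ with edge set $E$. A Hamiltonian cycle $\langle 1,i_1,\dots,i_r,n,j_1,\dots,j_{n-r-2}\rangle$ is called a pyramidal tour if $i_1<i_2<\dots<i_r$ and $j_1>j_2>\dots>j_{n-r-2}$ (the tour leaves city $1$, visits some cities in increasing order, reaches city $n$, and returns to $1$ visiting the remaining cities in decreasing order); tours are undirected. Let $PT_n$ be the set of all pyramidal tours. For $x\in PT_n$ its characteristic vector $x^v\in\mathbb{R}^E$ has $x^v_e=1$ if edge $e$ lies in $x$ and $0$ otherwise. The pyramidal tours polytope is $\mathrm{PYR}(n)=\operatorname{conv}\{x^v : x\in PT_n\}$; its vertices are exactly the vectors $x^v$, $x\in PT_n$. *)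

theory Defs
  imports "HOL-Analysis.Analysis" "HOL-Library.Function_Algebras"
begin

text \<open>Pointwise real vector space structure on functions, so that R^E can be
  represented by functions from edges (2-element vertex sets) to reals.\<close>

instantiation "fun" :: (type, real_vector) real_vector
begin
definition scaleR_fun :: "real \<Rightarrow> ('a \<Rightarrow> 'b) \<Rightarrow> 'a \<Rightarrow> 'b"
  where "scaleR_fun r f = (\<lambda>x. r *\<^sub>R f x)"
instance
  by standard (auto simp: scaleR_fun_def fun_eq_iff scaleR_add_right scaleR_add_left)
end

definition pyramidal_seq :: "nat \<Rightarrow> nat list \<Rightarrow> bool" where
  "pyramidal_seq n t \<longleftrightarrow>
     length t = n \<and> distinct t \<and> set t = {1..n} \<and> t ! 0 = 1 \<and>
     (\<exists>r. r + 1 < n \<and> t ! (r + 1) = n \<and>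
          sorted_wrt (<) (take r (drop 1 t)) \<and>
          sorted_wrt (>) (drop (r + 2) t))"

definition tour_edges :: "nat list \<Rightarrow> nat set set" where
  "tour_edges t = {{t ! i, t ! ((i + 1) mod length t)} | i. i < length t}"

text \<open>Tours are undirected cycles, hence identified with their edge sets.
  PT_n is the set of pyramidal tours.\<close>
definition PT :: "nat \<Rightarrow> nat set set set" where
  "PT n = {tour_edges t | t. pyramidal_seq n t}"

definition char_vec :: "nat set set \<Rightarrow> (nat set \<Rightarrow> real)" where
  "char_vec x = (\<lambda>e. if e \<in> x then 1 else 0)"

definition PYR :: "nat \<Rightarrow> (nat set \<Rightarrow> real) set" where
  "PYR n = convex hull (char_vec ` PT n)"

end

theory Submission
  imports Defs
begin

text \<open>A pyramidal tour is determined by the set U of interior cities it visits on the way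
  up, and its edges are read off locally from the positions k where k and k + 1 lie on
  different sides: {a, a + 1} is an edge unless a is such a switch, and {a, b} with b > a + 1
  is an edge iff a and b - 1 are consecutive switches. If a third pyramidal tour z uses only
  edges of x and y, then between consecutive common switches of x and y the switches of z
  copy those of x or those of y, so the tour w whose switch pattern is the sum mod 2 of the
  three patterns satisfies x + y = z + w as characteristic vectors. The midpoint of [x, y] is
  then the midpoint of [z, w], so [x, y] is no edge of the polytope. Conversely, if no such z
  exists, counting the edges outside x \<union> y is a linear functional that is nonnegative on the
  vertices and vanishes exactly at x and y, which exhibits [x, y] as a face.\<close>

section \<open>Faces cut out by a linear functional\<close>

lemma affine_linear_kernel:
  fixes f :: "'a::real_vector \<Rightarrow> real"
  assumes "linear f"
  shows "affine {x. f x = 0}"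
  using assms by (simp add: affine_def linear_add linear_scale)

lemma convex_linear_positive:
  fixes f :: "'a::real_vector \<Rightarrow> real"
  assumes "linear f"
  shows "convex {x. 0 < f x}"
proof (rule convexI)
  fix x y :: 'a and u v :: real
  assume "x \<in> {x. 0 < f x}" "y \<in> {x. 0 < f x}" "0 \<le> u" "0 \<le> v" "u + v = 1"
  then show "u *\<^sub>R x + v *\<^sub>R y \<in> {x. 0 < f x}"
    using assms by (cases "u = 0") (auto simp: linear_add linear_scale add_pos_nonneg)
qed

lemma face_of_convex_hull_linear_zero:
  fixes f :: "'a::real_vector \<Rightarrow> real"
  assumes "finite S" "T \<subseteq> S" "linear f"
    and "\<And>t. t \<in> T \<Longrightarrow> f t = 0" and "\<And>s. s \<in> S - T \<Longrightarrow> 0 < f s"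
  shows "convex hull T face_of convex hull S"
proof (rule face_of_convex_hulls[OF assms(1,2)])
  have "affine hull T \<subseteq> {x. f x = 0}"
    using assms(4) by (intro hull_minimal affine_linear_kernel[OF assms(3)]) auto
  moreover have "convex hull (S - T) \<subseteq> {x. 0 < f x}"
    using assms(5) by (intro hull_minimal convex_linear_positive[OF assms(3)]) auto
  ultimately show "affine hull T \<inter> convex hull (S - T) = {}" by fastforce
qed

lemma closed_segment_face_of_sum_eq:
  fixes a b c d :: "'a::real_vector"
  assumes "closed_segment a b face_of K" "c \<in> K" "d \<in> K" "a + b = c + d"
  shows "c \<in> closed_segment a b"
proof (cases "c = d")
  case True
  then have "c = midpoint a b" using assms(4) by (metis midpoint_eq_iff)
  then show ?thesis by simp
next
  case False
  have "midpoint c d = midpoint a b" using assms(4) by (simp add: midpoint_def)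
  then have "midpoint a b \<in> open_segment c d" using False by (metis midpoint_in_open_segment)
  then show ?thesis using face_ofD[OF assms(1) _ assms(2,3)] by simp
qed


section \<open>Switch patterns\<close>

lemma first_after:
  fixes f :: "nat \<Rightarrow> bool"
  assumes "f m" "k < m"
  shows "\<exists>q. k < q \<and> q \<le> m \<and> f q \<and> (\<forall>j. k < j \<and> j < q \<longrightarrow> \<not> f j)"
proof -
  define q where "q = (LEAST q. k < q \<and> f q)"
  have "k < q \<and> f q" unfolding q_def by (rule LeastI[of _ m]) (use assms in simp)
  moreover have "q \<le> m" unfolding q_def by (rule Least_le) (use assms in simp)
  moreover have "\<not> f j" if "k < j" "j < q" for j
    using not_less_Least[of j "\<lambda>q. k < q \<and> f q"] that unfolding q_def by blast
  ultimately show ?thesis by blast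
qed

lemma last_before:
  fixes f :: "nat \<Rightarrow> bool"
  assumes "f a" "a < k"
  shows "\<exists>p. a \<le> p \<and> p < k \<and> f p \<and> (\<forall>j. p < j \<and> j < k \<longrightarrow> \<not> f j)"
proof -
  define p where "p = (GREATEST p. p < k \<and> f p)"
  have "p < k \<and> f p" unfolding p_def by (rule GreatestI_nat[of _ a k]) (use assms in auto)
  moreover have "a \<le> p" unfolding p_def by (rule Greatest_le_nat[of _ a k]) (use assms in auto)
  moreover have "\<not> f j" if "p < j" "j < k" for j
    using Greatest_le_nat[of "\<lambda>p. p < k \<and> f p" j k] that unfolding p_def by fastforce
  ultimately show ?thesis by blast
qed

lemma const_on_interval:
  fixes s :: "nat \<Rightarrow> bool"
  assumes "\<And>j. l \<le> j \<Longrightarrow> j < r \<Longrightarrow> s (Suc j) = s j" and "l \<le> c" "c \<le> r"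
  shows "s c = s l"
  using assms(2) by (induction rule: dec_induct) (use assms(1,3) in auto)

text \<open>The edges {a, b}, a < b, of the pyramidal tour whose switch pattern is d.\<close>
definition switch_edge :: "nat \<Rightarrow> (nat \<Rightarrow> bool) \<Rightarrow> nat \<Rightarrow> nat \<Rightarrow> bool" where
  "switch_edge n d a b \<longleftrightarrow> (b = Suc a \<and> (a = 1 \<or> a = n - 1 \<or> \<not> d a)) \<or>
     (Suc (Suc a) \<le> b \<and> d a \<and> d (b - 1) \<and> (\<forall>j. a < j \<and> j < b - 1 \<longrightarrow> \<not> d j))"

lemma switch_edge_Suc: "switch_edge n d a (Suc a) \<longleftrightarrow> a = 1 \<or> a = n - 1 \<or> \<not> d a"
  unfolding switch_edge_def by auto

lemma switch_edge_long:
  "Suc (Suc a) \<le> b \<Longrightarrow>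
   switch_edge n d a b \<longleftrightarrow> d a \<and> d (b - 1) \<and> (\<forall>j. a < j \<and> j < b - 1 \<longrightarrow> \<not> d j)"
  unfolding switch_edge_def by auto

lemma switch_edge_cong:
  "Suc (Suc a) \<le> b \<Longrightarrow> (\<And>k. a \<le> k \<Longrightarrow> k \<le> b - 1 \<Longrightarrow> d k = d' k) \<Longrightarrow>
   switch_edge n d a b = switch_edge n d' a b"
  unfolding switch_edge_def by auto

lemma switch_edge_long_unique:
  assumes "Suc (Suc a) \<le> b" "switch_edge n d a b" "switch_edge n d' a b" "a \<le> k" "k \<le> b - 1"
  shows "d k = d' k"
  using assms by (cases "k = a \<or> k = b - 1") (auto simp: switch_edge_long)

text \<open>s colours the interior cities 2, ..., n - 1 by the side of the tour they lie on. The ends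
  1 and n lie on both sides, which is why 1 and n - 1 always count as switches.\<close>
definition colour_switch :: "nat \<Rightarrow> (nat \<Rightarrow> bool) \<Rightarrow> nat \<Rightarrow> bool" where
  "colour_switch n s k \<longleftrightarrow> k = 1 \<or> k = n - 1 \<or> s k \<noteq> s (Suc k)"

definition colour_neighbours :: "nat \<Rightarrow> (nat \<Rightarrow> bool) \<Rightarrow> nat \<Rightarrow> nat \<Rightarrow> bool" where
  "colour_neighbours n s a b \<longleftrightarrow>
     (\<exists>\<sigma>. (a = 1 \<or> s a = \<sigma>) \<and> (b = n \<or> s b = \<sigma>) \<and> (\<forall>c. a < c \<and> c < b \<longrightarrow> s c \<noteq> \<sigma>))"

lemma colour_neighbours_Suc_iff_switch_edge:
  assumes "1 \<le> a" "Suc a \<le> n"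
  shows "colour_neighbours n s a (Suc a) \<longleftrightarrow> switch_edge n (colour_switch n s) a (Suc a)"
proof -
  have "colour_neighbours n s a (Suc a) \<longleftrightarrow> a = 1 \<or> Suc a = n \<or> s a = s (Suc a)"
  proof
    assume side: "a = 1 \<or> Suc a = n \<or> s a = s (Suc a)"
    show "colour_neighbours n s a (Suc a)"
    proof (cases "a = 1")
      case True
      then show ?thesis unfolding colour_neighbours_def by (intro exI[of _ "s (Suc a)"]) auto
    next
      case False
      then show ?thesis unfolding colour_neighbours_def using side by (intro exI[of _ "s a"]) auto
    qed
  qed (auto simp: colour_neighbours_def)
  also have "\<dots> \<longleftrightarrow> switch_edge n (colour_switch n s) a (Suc a)"
    using assms by (auto simp: switch_edge_Suc colour_switch_def)
  finally show ?thesis .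
qed

lemma colour_neighbours_imp_switch_edge:
  assumes long: "Suc (Suc a) \<le> b" and ab: "1 \<le> a" "b \<le> n" and nb: "colour_neighbours n s a b"
  shows "switch_edge n (colour_switch n s) a b"
proof -
  obtain \<sigma> where sa: "a = 1 \<or> s a = \<sigma>" and sb: "b = n \<or> s b = \<sigma>"
    and sc: "\<forall>c. a < c \<and> c < b \<longrightarrow> s c \<noteq> \<sigma>"
    using nb unfolding colour_neighbours_def by blast
  have "colour_switch n s a"
  proof (cases "a = 1")
    case False
    then have "s a = \<sigma>" "s (Suc a) \<noteq> \<sigma>" using sa sc long by auto
    then show ?thesis by (auto simp: colour_switch_def)
  qed (simp add: colour_switch_def)
  moreover have "colour_switch n s (b - 1)"
  proof (cases "b = n")
    case False
    then have "s b = \<sigma>" "s (b - 1) \<noteq> \<sigma>" "Suc (b - 1) = b" using sb sc long by auto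
    then show ?thesis by (auto simp: colour_switch_def)
  qed (simp add: colour_switch_def)
  moreover have "\<not> colour_switch n s j" if "a < j" "j < b - 1" for j
  proof -
    have "s j \<noteq> \<sigma>" "s (Suc j) \<noteq> \<sigma>" using sc that by auto
    moreover have "j \<noteq> 1" "j \<noteq> n - 1" using that ab by linarith+
    ultimately show ?thesis by (auto simp: colour_switch_def)
  qed
  ultimately show ?thesis using long by (simp add: switch_edge_long)
qed

lemma switch_edge_imp_colour_neighbours:
  assumes long: "Suc (Suc a) \<le> b" and ab: "1 \<le> a" "b \<le> n"
    and edge: "switch_edge n (colour_switch n s) a b"
  shows "colour_neighbours n s a b"
proof -
  have da: "colour_switch n s a" and db: "colour_switch n s (b - 1)"
    and dj: "\<forall>j. a < j \<and> j < b - 1 \<longrightarrow> \<not> colour_switch n s j"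
    using edge long by (simp_all add: switch_edge_long)
  have const: "s c = s (Suc a)" if "Suc a \<le> c" "c \<le> b - 1" for c
  proof (rule const_on_interval[OF _ that])
    fix j assume "Suc a \<le> j" "j < b - 1"
    then show "s (Suc j) = s j" using dj by (auto simp: colour_switch_def)
  qed
  have ends: "a \<noteq> n - 1" "b - 1 \<noteq> 1" "Suc (b - 1) = b" using long ab by linarith+
  show ?thesis unfolding colour_neighbours_def
  proof (intro exI[of _ "\<not> s (Suc a)"] conjI allI impI)
    show "a = 1 \<or> s a = (\<not> s (Suc a))" using da ends(1) by (auto simp: colour_switch_def)
    show "b = n \<or> s b = (\<not> s (Suc a))"
    proof (cases "b = n")
      case False
      then have "b - 1 \<noteq> n - 1" using ab long by linarith
      then have "s b \<noteq> s (b - 1)" using db ends(2,3) by (simp add: colour_switch_def)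
      then show ?thesis using const[of "b - 1"] long by simp
    qed simp
    show "s c \<noteq> (\<not> s (Suc a))" if "a < c \<and> c < b" for c
      using const[of c] that by auto
  qed
qed

lemma colour_neighbours_iff_switch_edge:
  assumes "1 \<le> a" "a < b" "b \<le> n"
  shows "colour_neighbours n s a b \<longleftrightarrow> switch_edge n (colour_switch n s) a b"
proof (cases "b = Suc a")
  case True
  then show ?thesis using colour_neighbours_Suc_iff_switch_edge assms by simp
next
  case False
  then have "Suc (Suc a) \<le> b" using assms by linarith
  then show ?thesis
    using colour_neighbours_imp_switch_edge switch_edge_imp_colour_neighbours assms by blast
qed

locale switch_cover =
  fixes n :: nat and d e f :: "nat \<Rightarrow> bool"
  assumes n3: "3 \<le> n"
    and bounds_1: "d 1" "e 1" "f 1" and bounds_n: "d (n - 1)" "e (n - 1)" "f (n - 1)"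
    and covered: "\<And>a b. 1 \<le> a \<Longrightarrow> a < b \<Longrightarrow> b \<le> n \<Longrightarrow> switch_edge n f a b \<Longrightarrow>
                   switch_edge n d a b \<or> switch_edge n e a b"
begin

lemma swap: "switch_cover n e d f"
  using n3 bounds_1 bounds_n covered by unfold_locales blast+

lemma covered_switch_cases:
  assumes "2 \<le> k" "k \<le> n - 2"
  shows "f k = d k \<or> f k = e k"
proof (rule ccontr)
  assume c: "\<not> (f k = d k \<or> f k = e k)"
  have kn: "Suc k \<le> n" using assms n3 by linarith
  show False
  proof (cases "f k")
    case False
    then have "switch_edge n f k (Suc k)" by (simp add: switch_edge_Suc)
    moreover have "\<not> switch_edge n d k (Suc k)" "\<not> switch_edge n e k (Suc k)"
      using c False assms n3 by (auto simp: switch_edge_Suc)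
    ultimately show False using covered[of k "Suc k"] assms kn by auto
  next
    case True
    obtain p where p: "1 \<le> p" "p < k" "f p" "\<forall>j. p < j \<and> j < k \<longrightarrow> \<not> f j"
      using last_before[of f 1 k] bounds_1 assms by auto
    have "switch_edge n f p (Suc k)" using p True unfolding switch_edge_def by auto
    moreover have "\<not> switch_edge n d p (Suc k)" "\<not> switch_edge n e p (Suc k)"
      using c True p unfolding switch_edge_def by auto
    ultimately show False using covered[of p "Suc k"] p kn by auto
  qed
qed

text \<open>Around a stretch from i to j free of switches of f, the nearest switches of f enclose
  a switch edge of f; it is an edge of d or of e, so f agrees with d at i or with e at j.\<close>
lemma switch_between_crossover:
  assumes ij: "i < j" "1 \<le> i" "j < n" and fi: "f i \<noteq> d i" and fj: "f j \<noteq> e j"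
  shows "\<exists>c. i < c \<and> c < j \<and> f c"
proof (rule ccontr)
  assume no_switch: "\<not> ?thesis"
  obtain p where p: "1 \<le> p" "p < Suc i" "f p" "\<forall>k. p < k \<and> k < Suc i \<longrightarrow> \<not> f k"
    using last_before[of f 1 "Suc i", OF bounds_1(3)] ij by auto
  have "j - 1 < n - 1" using ij by linarith
  then obtain q where q: "j - 1 < q" "q \<le> n - 1" "f q" "\<forall>k. j - 1 < k \<and> k < q \<longrightarrow> \<not> f k"
    using first_after[of f "n - 1" "j - 1", OF bounds_n(3)] by blast
  have long: "Suc (Suc p) \<le> Suc q" and bracket: "p \<le> i" "j \<le> q"
    using p(2) q(1) ij by linarith+
  have "\<not> f k" if "p < k" "k < q" for k
  proof -
    consider "k \<le> i" | "i < k" "k < j" | "j \<le> k" by linarith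
    then show ?thesis using p(4) q(4) no_switch that by cases auto
  qed
  then have fedge: "switch_edge n f p (Suc q)"
    unfolding switch_edge_long[OF long] using p(3) q(3) by simp
  have "1 \<le> p" "p < Suc q" "Suc q \<le> n" using p(1) q(2) long n3 by linarith+
  then have "switch_edge n d p (Suc q) \<or> switch_edge n e p (Suc q)"
    using covered fedge by blast
  then show False
  proof
    assume "switch_edge n d p (Suc q)"
    then have "d i = f i" using switch_edge_long_unique[OF long _ fedge, of d i] bracket ij by simp
    then show False using fi by simp
  next
    assume "switch_edge n e p (Suc q)"
    then have "e j = f j" using switch_edge_long_unique[OF long _ fedge, of e j] bracket ij by simp
    then show False using fj by simp
  qed
qed

lemma no_crossover:
  "i < j \<Longrightarrow> 2 \<le> i \<Longrightarrow> j \<le> n - 2 \<Longrightarrow> f i \<noteq> d i \<Longrightarrow> f j \<noteq> e j \<Longrightarrow>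
   \<forall>c. i < c \<and> c < j \<longrightarrow> \<not> (d c \<and> e c) \<Longrightarrow> False"
proof (induction "j - i" arbitrary: i j rule: less_induct)
  case less
  have "1 \<le> i" "j < n" using less.prems(1-3) n3 by linarith+
  then obtain c where c: "i < c" "c < j" "f c"
    using switch_between_crossover[OF less.prems(1) _ _ less.prems(4,5)] by blast
  have "\<not> (d c \<and> e c)" using less.prems(6) c by blast
  then consider "\<not> e c" | "\<not> d c" by blast
  then show False
  proof cases
    case 1
    show False
    proof (rule less.hyps[where i = i and j = c])
      show "c - i < j - i" using c by linarith
      show "c \<le> n - 2" using c less.prems(3) by linarith
      show "f c \<noteq> e c" using c(3) 1 by simp
    qed (use c less.prems in auto)
  next
    case 2
    show False
    proof (rule less.hyps[where i = c and j = j])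
      show "j - c < j - i" using c by linarith
      show "2 \<le> c" using c less.prems(2) by linarith
      show "f c \<noteq> d c" using c(3) 2 by simp
    qed (use c less.prems in auto)
  qed
qed

lemma follows_on_block:
  assumes ab: "1 \<le> a" "Suc (Suc a) \<le> b" "b \<le> n"
    and no_common: "\<forall>c. a < c \<and> c < b - 1 \<longrightarrow> \<not> (d c \<and> e c)"
  shows "(\<forall>k. a \<le> k \<and> k \<le> b - 1 \<longrightarrow> f k = d k) \<or> (\<forall>k. a \<le> k \<and> k \<le> b - 1 \<longrightarrow> f k = e k)"
proof (rule ccontr)
  assume "\<not> ?thesis"
  then obtain i j where i: "a \<le> i" "i \<le> b - 1" "f i \<noteq> d i"
    and j: "a \<le> j" "j \<le> b - 1" "f j \<noteq> e j" by auto
  have inner: "2 \<le> k \<and> k \<le> n - 2" if "a \<le> k" "k \<le> b - 1" "f k \<noteq> d k \<or> f k \<noteq> e k" for k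
  proof -
    have "k \<noteq> 1" "k \<noteq> n - 1" using that bounds_1 bounds_n by auto
    then show ?thesis using that ab by linarith
  qed
  have i2: "2 \<le> i" "i \<le> n - 2" using inner[OF i(1,2)] i(3) by blast+
  have j2: "2 \<le> j" "j \<le> n - 2" using inner[OF j(1,2)] j(3) by blast+
  have "i \<noteq> j" using covered_switch_cases[OF i2] i(3) j(3) by auto
  then consider "i < j" | "j < i" by linarith
  then show False
  proof cases
    case 1
    have "\<forall>c. i < c \<and> c < j \<longrightarrow> \<not> (d c \<and> e c)" using no_common i j by auto
    then show False by (rule no_crossover[OF 1 i2(1) j2(2) i(3) j(3)])
  next
    case 2
    have "\<forall>c. j < c \<and> c < i \<longrightarrow> \<not> (e c \<and> d c)" using no_common i j by auto
    then show False by (rule switch_cover.no_crossover[OF swap 2 j2(1) i2(2) j(3) i(3)])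
  qed
qed

lemma switch_edge_exchange_Suc:
  assumes g: "\<And>k. 1 \<le> k \<Longrightarrow> k \<le> n - 1 \<Longrightarrow> g k = (d k \<noteq> (e k \<noteq> f k))"
    and a: "1 \<le> a" "Suc a \<le> n"
  shows "(if switch_edge n d a (Suc a) then 1 else 0) + (if switch_edge n e a (Suc a) then 1 else 0) =
    (if switch_edge n f a (Suc a) then 1 else 0) + (if switch_edge n g a (Suc a) then 1 else (0::real))"
proof (cases "a = 1 \<or> a = n - 1")
  case False
  then have a2: "2 \<le> a" "a \<le> n - 2" using a by linarith+
  have "g a = (d a \<noteq> (e a \<noteq> f a))" using g a2 by auto
  moreover have "f a = d a \<or> f a = e a" by (rule covered_switch_cases[OF a2])
  ultimately show ?thesis using False by (auto simp: switch_edge_Suc)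
qed (auto simp: switch_edge_Suc)

lemma switch_edge_exchange_long:
  assumes g: "\<And>k. 1 \<le> k \<Longrightarrow> k \<le> n - 1 \<Longrightarrow> g k = (d k \<noteq> (e k \<noteq> f k))"
    and ab: "1 \<le> a" "Suc (Suc a) \<le> b" "b \<le> n"
  shows "(if switch_edge n d a b then 1 else 0) + (if switch_edge n e a b then 1 else 0) =
         (if switch_edge n f a b then 1 else 0) + (if switch_edge n g a b then 1 else (0::real))"
proof (cases "\<exists>c. a < c \<and> c < b - 1 \<and> d c \<and> e c")
  case True
  then obtain c where c: "a < c" "c < b - 1" "d c" "e c" by auto
  have c2: "2 \<le> c" "c \<le> n - 2" using c ab by linarith+
  have "f c" using covered_switch_cases[OF c2] c by auto
  moreover have "g c" using g[of c] c2 c \<open>f c\<close> by auto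
  ultimately show ?thesis using c ab(2) by (auto simp: switch_edge_long)
next
  case False
  have gk: "\<And>k. a \<le> k \<Longrightarrow> k \<le> b - 1 \<Longrightarrow> g k = (d k \<noteq> (e k \<noteq> f k))"
    using g ab by auto
  from False have "\<forall>c. a < c \<and> c < b - 1 \<longrightarrow> \<not> (d c \<and> e c)" by blast
  from follows_on_block[OF ab this] show ?thesis
  proof (elim disjE)
    assume fd: "\<forall>k. a \<le> k \<and> k \<le> b - 1 \<longrightarrow> f k = d k"
    have "switch_edge n f a b = switch_edge n d a b"
      by (rule switch_edge_cong[OF ab(2)]) (use fd in auto)
    moreover have "switch_edge n g a b = switch_edge n e a b"
      by (rule switch_edge_cong[OF ab(2)]) (use fd gk in auto)
    ultimately show ?thesis by simp
  next
    assume fe: "\<forall>k. a \<le> k \<and> k \<le> b - 1 \<longrightarrow> f k = e k"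
    have "switch_edge n f a b = switch_edge n e a b"
      by (rule switch_edge_cong[OF ab(2)]) (use fe in auto)
    moreover have "switch_edge n g a b = switch_edge n d a b"
      by (rule switch_edge_cong[OF ab(2)]) (use fe gk in auto)
    ultimately show ?thesis by simp
  qed
qed

lemma switch_edge_exchange:
  assumes "\<And>k. 1 \<le> k \<Longrightarrow> k \<le> n - 1 \<Longrightarrow> g k = (d k \<noteq> (e k \<noteq> f k))"
    and "1 \<le> a" "a < b" "b \<le> n"
  shows "(if switch_edge n d a b then 1 else 0) + (if switch_edge n e a b then 1 else 0) =
         (if switch_edge n f a b then 1 else 0) + (if switch_edge n g a b then 1 else (0::real))"
proof (cases "b = Suc a")
  case True
  then show ?thesis using switch_edge_exchange_Suc[OF assms(1)] assms(2,4) by simp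
next
  case False
  then have "Suc (Suc a) \<le> b" using assms(3) by linarith
  then show ?thesis using switch_edge_exchange_long[OF assms(1)] assms(2,4) by simp
qed

end


section \<open>Pyramidal tours by their ascending cities\<close>

fun path_edges :: "'a list \<Rightarrow> 'a set set" where
  "path_edges (a # b # xs) = insert {a, b} (path_edges (b # xs))"
| "path_edges _ = {}"

lemma path_edges_conv_nth: "path_edges xs = (\<lambda>i. {xs ! i, xs ! Suc i}) ` {i. Suc i < length xs}"
proof (induction xs rule: path_edges.induct)
  case (1 a b xs)
  have "{i. Suc i < length (a # b # xs)} = insert 0 (Suc ` {i. Suc i < length (b # xs)})"
    by (auto simp: image_iff) (metis Suc_less_SucD less_Suc_eq_0_disj)
  then show ?case using 1 by (simp add: image_image)
qed auto

lemma tour_edges_conv_path_edges: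
  assumes "xs \<noteq> []"
  shows "tour_edges xs = path_edges (xs @ [hd xs])"
proof -
  have "tour_edges xs = (\<lambda>i. {xs ! i, xs ! ((i + 1) mod length xs)}) ` {i. i < length xs}"
    unfolding tour_edges_def by auto
  also have "\<dots> = (\<lambda>i. {(xs @ [hd xs]) ! i, (xs @ [hd xs]) ! Suc i}) ` {i. Suc i < length (xs @ [hd xs])}"
  proof (rule image_cong)
    show "{i. i < length xs} = {i. Suc i < length (xs @ [hd xs])}" by auto
  next
    fix i assume "i \<in> {i. Suc i < length (xs @ [hd xs])}"
    then have i: "i < length xs" by auto
    show "{xs ! i, xs ! ((i + 1) mod length xs)} = {(xs @ [hd xs]) ! i, (xs @ [hd xs]) ! Suc i}"
    proof (cases "Suc i < length xs")
      case True
      then show ?thesis using i by (simp add: nth_append)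
    next
      case False
      then have "Suc i = length xs" using i by simp
      then show ?thesis using i assms by (simp add: nth_append hd_conv_nth)
    qed
  qed
  finally show ?thesis by (simp add: path_edges_conv_nth)
qed

lemma path_edges_append: "path_edges (xs @ m # ys) = path_edges (xs @ [m]) \<union> path_edges (m # ys)"
  by (induction xs rule: path_edges.induct) auto

lemma path_edges_rev: "path_edges (rev xs) = path_edges xs"
proof (induction xs rule: path_edges.induct)
  case (1 a b xs)
  have "path_edges (rev (a # b # xs)) = path_edges (rev xs @ b # [a])" by simp
  also have "\<dots> = path_edges (rev (b # xs)) \<union> {{a, b}}" using path_edges_append[of "rev xs" b "[a]"]
    by (simp add: insert_commute)
  finally show ?case using 1 by auto
qed auto

definition consecutive :: "'a::linorder set \<Rightarrow> 'a \<Rightarrow> 'a \<Rightarrow> bool" where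
  "consecutive S a b \<longleftrightarrow> a \<in> S \<and> b \<in> S \<and> a < b \<and> (\<forall>c\<in>S. \<not> (a < c \<and> c < b))"

lemma consecutive_insert_least:
  fixes a b :: "'a::linorder"
  assumes lt: "\<forall>x\<in>S. a < x" and b: "b \<in> S" "\<forall>x\<in>S. b \<le> x"
  shows "consecutive (insert a S) x y \<longleftrightarrow> (x = a \<and> y = b) \<or> consecutive S x y"
proof
  assume c: "consecutive (insert a S) x y"
  show "(x = a \<and> y = b) \<or> consecutive S x y"
  proof (cases "x = a")
    case True
    then have "y \<in> S" using c unfolding consecutive_def by auto
    have "y = b"
    proof (rule ccontr)
      assume "y \<noteq> b"
      then have "a < b" "b < y" using lt b \<open>y \<in> S\<close> by force+
      then show False using c True b unfolding consecutive_def by auto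
    qed
    then show ?thesis using True by simp
  next
    case False
    then have "x \<in> S" using c unfolding consecutive_def by auto
    then have "y \<in> S" using c lt unfolding consecutive_def by force
    then show ?thesis using c \<open>x \<in> S\<close> unfolding consecutive_def by auto
  qed
next
  assume "(x = a \<and> y = b) \<or> consecutive S x y"
  then show "consecutive (insert a S) x y"
    using lt b unfolding consecutive_def by force
qed

lemma path_edges_sorted:
  "sorted_wrt (<) xs \<Longrightarrow> path_edges xs = {{a, b} | a b. consecutive (set xs) a b}"
proof (induction xs rule: path_edges.induct)
  case (1 a b xs)
  have "path_edges (a # b # xs) = insert {a, b} {{x, y} | x y. consecutive (set (b # xs)) x y}"
    using 1 by simp
  also have "\<dots> = {{x, y} | x y. consecutive (insert a (set (b # xs))) x y}"
    using consecutive_insert_least[of "set (b # xs)" a b] 1(2) by (auto simp: less_imp_le)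
  finally show ?case by simp
qed (auto simp: consecutive_def)

definition pyr_seq :: "nat \<Rightarrow> nat set \<Rightarrow> nat list" where
  "pyr_seq n U = 1 # sorted_list_of_set U @ n # rev (sorted_list_of_set ({2..<n} - U))"

abbreviation switches :: "nat \<Rightarrow> nat set \<Rightarrow> nat \<Rightarrow> bool" where
  "switches n U \<equiv> colour_switch n (\<lambda>c. c \<in> U)"

lemma sorted_list_of_set_insert_ends:
  fixes U :: "nat set"
  assumes "U \<subseteq> {2..<n}" "2 \<le> n"
  shows "sorted_list_of_set (insert 1 (insert n U)) = 1 # sorted_list_of_set U @ [n]"
proof -
  have fin: "finite U" using assms finite_subset by blast
  show ?thesis
  proof (rule strict_sorted_equal)
    have s1: "sorted_wrt (<) (sorted_list_of_set U)" by simp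
    have s2: "set (sorted_list_of_set U) = U" using fin by simp
    show "sorted_wrt (<) (1 # sorted_list_of_set U @ [n])"
      unfolding sorted_wrt.simps(2) sorted_wrt_append using s1 assms by (auto simp: s2)
    show "sorted_wrt (<) (sorted_list_of_set (insert 1 (insert n U)))"
      by (rule strict_sorted_list_of_set)
    have "set (sorted_list_of_set (insert 1 (insert n U))) = insert 1 (insert n U)"
      by (rule set_sorted_list_of_set) (use fin in blast)
    then show "set (sorted_list_of_set (insert 1 (insert n U))) = set (1 # sorted_list_of_set U @ [n])"
      using s2 by auto
  qed
qed

lemma tour_edges_pyr_seq:
  assumes "U \<subseteq> {2..<n}" "2 \<le> n"
  shows "tour_edges (pyr_seq n U) =
    {{a, b} | a b. consecutive (insert 1 (insert n U)) a b} \<union>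
    {{a, b} | a b. consecutive (insert 1 (insert n ({2..<n} - U))) a b}"
proof -
  let ?A = "sorted_list_of_set U" and ?B = "sorted_list_of_set ({2..<n} - U)"
  have "tour_edges (pyr_seq n U) = path_edges (pyr_seq n U @ [1])"
    by (simp add: tour_edges_conv_path_edges pyr_seq_def)
  also have "pyr_seq n U @ [1] = (1 # ?A) @ n # (rev ?B @ [1])" by (simp add: pyr_seq_def)
  also have "path_edges \<dots> = path_edges (1 # ?A @ [n]) \<union> path_edges (n # rev ?B @ [1])"
    using path_edges_append[of "1 # ?A" n "rev ?B @ [1]"] by simp
  also have "path_edges (n # rev ?B @ [1]) = path_edges (1 # ?B @ [n])"
    using path_edges_rev[of "1 # ?B @ [n]"] by simp
  also have "1 # ?A @ [n] = sorted_list_of_set (insert 1 (insert n U))"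
    using sorted_list_of_set_insert_ends[OF assms] by simp
  also have "1 # ?B @ [n] = sorted_list_of_set (insert 1 (insert n ({2..<n} - U)))"
    using sorted_list_of_set_insert_ends[of "{2..<n} - U" n] assms(2) by auto
  finally have T: "tour_edges (pyr_seq n U) = path_edges (sorted_list_of_set (insert 1 (insert n U))) \<union>
      path_edges (sorted_list_of_set (insert 1 (insert n ({2..<n} - U))))" .
  have pX: "path_edges (sorted_list_of_set X) = {{a, b} | a b. consecutive X a b}" if "finite X" for X
    using path_edges_sorted[of "sorted_list_of_set X"] that by simp
  have f1: "finite (insert 1 (insert n U))" using assms finite_subset by auto
  have f2: "finite (insert 1 (insert n ({2..<n} - U)))" by auto
  show ?thesis unfolding T pX[OF f1] pX[OF f2] ..
qed

lemma consecutive_insert_ends_iff: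
  fixes n :: nat
  assumes "S \<subseteq> {2..<n}" "2 \<le> n"
  shows "consecutive (insert 1 (insert n S)) a b \<longleftrightarrow>
    1 \<le> a \<and> a < b \<and> b \<le> n \<and> (a = 1 \<or> a \<in> S) \<and> (b = n \<or> b \<in> S) \<and> (\<forall>c. a < c \<and> c < b \<longrightarrow> c \<notin> S)"
  using assms unfolding consecutive_def by (auto; force)

lemma consecutive_colour_class_iff:
  fixes n :: nat
  assumes "2 \<le> n"
  shows "consecutive (insert 1 (insert n {c \<in> {2..<n}. s c = \<sigma>})) a b \<longleftrightarrow>
    1 \<le> a \<and> a < b \<and> b \<le> n \<and> (a = 1 \<or> s a = \<sigma>) \<and> (b = n \<or> s b = \<sigma>) \<and>
    (\<forall>c. a < c \<and> c < b \<longrightarrow> s c \<noteq> \<sigma>)"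
proof -
  have "{c \<in> {2..<n}. s c = \<sigma>} \<subseteq> {2..<n}" by blast
  from consecutive_insert_ends_iff[OF this assms, of a b] show ?thesis by auto
qed

lemma consecutive_ascending_or_descending_iff:
  assumes "U \<subseteq> {2..<n}" and n2: "2 \<le> n"
  shows "consecutive (insert 1 (insert n U)) a b \<or> consecutive (insert 1 (insert n ({2..<n} - U))) a b
    \<longleftrightarrow> 1 \<le> a \<and> a < b \<and> b \<le> n \<and> switch_edge n (switches n U) a b"
proof -
  have "U = {c \<in> {2..<n}. (c \<in> U) = True}" "{2..<n} - U = {c \<in> {2..<n}. (c \<in> U) = False}"
    using assms(1) by auto
  then have "consecutive (insert 1 (insert n U)) a b \<or> consecutive (insert 1 (insert n ({2..<n} - U))) a b
    \<longleftrightarrow> (\<exists>\<sigma>. consecutive (insert 1 (insert n {c \<in> {2..<n}. (c \<in> U) = \<sigma>})) a b)"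
    unfolding ex_bool_eq by simp
  also have "\<dots> \<longleftrightarrow> 1 \<le> a \<and> a < b \<and> b \<le> n \<and> colour_neighbours n (\<lambda>c. c \<in> U) a b"
    unfolding consecutive_colour_class_iff[OF n2] by (simp only: ex_simps colour_neighbours_def)
  also have "\<dots> \<longleftrightarrow> 1 \<le> a \<and> a < b \<and> b \<le> n \<and> switch_edge n (switches n U) a b"
    using colour_neighbours_iff_switch_edge[of a b n] by blast
  finally show ?thesis .
qed

lemma mem_tour_edges_pyr_seq:
  assumes "U \<subseteq> {2..<n}" and n2: "2 \<le> n"
  shows "\<epsilon> \<in> tour_edges (pyr_seq n U) \<longleftrightarrow>
     (\<exists>a b. \<epsilon> = {a, b} \<and> 1 \<le> a \<and> a < b \<and> b \<le> n \<and> switch_edge n (switches n U) a b)"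
proof -
  have "\<epsilon> \<in> tour_edges (pyr_seq n U) \<longleftrightarrow> (\<exists>a b. \<epsilon> = {a, b} \<and>
      (consecutive (insert 1 (insert n U)) a b \<or> consecutive (insert 1 (insert n ({2..<n} - U))) a b))"
    unfolding tour_edges_pyr_seq[OF assms(1) n2] by blast
  then show ?thesis unfolding consecutive_ascending_or_descending_iff[OF assms] .
qed

lemma doubleton_mem_tour_edges_pyr_seq:
  assumes "U \<subseteq> {2..<n}" "2 \<le> n" "1 \<le> a" "a < b" "b \<le> n"
  shows "{a, b} \<in> tour_edges (pyr_seq n U) \<longleftrightarrow> switch_edge n (switches n U) a b"
  unfolding mem_tour_edges_pyr_seq[OF assms(1,2)] using assms(3-5)
  by (auto simp: doubleton_eq_iff)

lemma pyramidal_seq_pyr_seq: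
  fixes U :: "nat set"
  assumes U: "U \<subseteq> {2..<n}" and n2: "2 \<le> n"
  shows "pyramidal_seq n (pyr_seq n U)"
proof -
  let ?A = "sorted_list_of_set U" and ?D = "{2..<n} - U"
  let ?B = "sorted_list_of_set ?D"
  have fin: "finite U" using U finite_subset by blast
  have sA: "set ?A = U" using fin by simp
  have sB: "set ?B = ?D" by simp
  have cardU: "card U + card ?D = n - 2"
  proof -
    have "card ?D = card {2..<n} - card U" using U fin by (simp add: card_Diff_subset)
    moreover have "card U \<le> card {2..<n}" using U by (intro card_mono) auto
    ultimately show ?thesis by simp
  qed
  have lenA: "length ?A = card U" by simp
  have len: "length (pyr_seq n U) = n" unfolding pyr_seq_def using cardU n2 by simp
  have dist: "distinct (pyr_seq n U)" unfolding pyr_seq_def using U sA sB n2 by auto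
  have set: "set (pyr_seq n U) = {1..n}" unfolding pyr_seq_def using U sA sB n2 by auto
  have r1: "card U + 1 < n" using cardU n2 by linarith
  have nth: "pyr_seq n U ! (card U + 1) = n" unfolding pyr_seq_def using lenA
    by (simp add: nth_append)
  have tk: "take (card U) (drop 1 (pyr_seq n U)) = ?A" unfolding pyr_seq_def using lenA by simp
  have dr: "drop (card U + 2) (pyr_seq n U) = rev ?B" unfolding pyr_seq_def using lenA by simp
  have sr: "sorted_wrt (>) (rev ?B)" by (simp add: sorted_wrt_rev)
  show ?thesis unfolding pyramidal_seq_def
    using len dist set r1 nth tk dr sr by (intro conjI exI[of _ "card U"]) (auto simp: pyr_seq_def)
qed

lemma pyramidal_seqE:
  assumes "pyramidal_seq n t"
  obtains A R where "t = 1 # A @ n # R" "sorted_wrt (<) A" "sorted_wrt (>) R"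
proof -
  obtain r where len: "length t = n" and t0: "t ! 0 = 1" and r: "r + 1 < n" "t ! (r + 1) = n"
    and A: "sorted_wrt (<) (take r (drop 1 t))" and R: "sorted_wrt (>) (drop (r + 2) t)"
    using assms unfolding pyramidal_seq_def by blast
  have "t = take 1 t @ drop 1 t" by simp
  also have "take 1 t = [1]" using len r(1) t0 by (cases t) auto
  also have "drop 1 t = take r (drop 1 t) @ drop (Suc r) t"
    by (metis append_take_drop_id drop_drop plus_1_eq_Suc add.commute)
  also have "drop (Suc r) t = n # drop (r + 2) t"
    using Cons_nth_drop_Suc[of "Suc r" t] r len by simp
  finally show ?thesis using that A R by simp
qed

lemma pyramidal_seq_imp_pyr_seq:
  assumes p: "pyramidal_seq n t"
  shows "\<exists>U \<subseteq> {2..<n}. t = pyr_seq n U"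
proof -
  obtain A R where t: "t = 1 # A @ n # R" and A: "sorted_wrt (<) A" and R: "sorted_wrt (>) R"
    using pyramidal_seqE[OF p] .
  have d: "distinct (1 # A @ n # R)" and s: "set (1 # A @ n # R) = {1..n}"
    using p unfolding t pyramidal_seq_def by blast+
  have inner: "x \<in> {2..<n}" if "x \<in> set A \<union> set R" for x
  proof -
    have "x \<in> {1..n}" "x \<noteq> 1" "x \<noteq> n" using d s that by auto
    then show ?thesis by auto
  qed
  then have U: "set A \<subseteq> {2..<n}" by blast
  have "set R = {2..<n} - set A"
  proof
    show "set R \<subseteq> {2..<n} - set A" using inner d by auto
    show "{2..<n} - set A \<subseteq> set R"
    proof
      fix x assume x: "x \<in> {2..<n} - set A"
      then have "x \<in> set (1 # A @ n # R)" using s by auto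
      then show "x \<in> set R" using x by auto
    qed
  qed
  moreover have "A = sorted_list_of_set (set A)"
    by (rule strict_sorted_equal[OF strict_sorted_list_of_set A]) simp
  moreover have "rev R = sorted_list_of_set (set R)"
    by (rule strict_sorted_equal[OF strict_sorted_list_of_set]) (use R in \<open>simp_all add: sorted_wrt_rev\<close>)
  ultimately have "t = pyr_seq n (set A)" unfolding t pyr_seq_def by (metis rev_rev_ident)
  then show ?thesis using U by blast
qed

lemma PT_eq_pyr_seq:
  assumes "2 \<le> n"
  shows "PT n = (\<lambda>U. tour_edges (pyr_seq n U)) ` Pow {2..<n}"
  unfolding PT_def using pyramidal_seq_pyr_seq[OF _ assms] pyramidal_seq_imp_pyr_seq[of n]
  by auto


section \<open>The pyramidal tours polytope\<close>

lemma scaleR_fun_apply [simp]: "(c *\<^sub>R f) x = c *\<^sub>R f x"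
  by (simp add: scaleR_fun_def)

lemma inj_char_vec: "inj char_vec"
  by (rule injI) (metis char_vec_def zero_neq_one subsetI subset_antisym)

lemma char_vec_in_closed_segment:
  assumes "char_vec z \<in> closed_segment (char_vec x) (char_vec y)"
  shows "z = x \<or> z = y"
proof (cases "x = y")
  case True
  then show ?thesis using assms inj_char_vec by (auto dest: injD)
next
  case False
  obtain u where u: "0 \<le> u" "u \<le> 1" "char_vec z = (1 - u) *\<^sub>R char_vec x + u *\<^sub>R char_vec y"
    using assms unfolding in_segment by blast
  show ?thesis
  proof (cases "u = 0 \<or> u = 1")
    case True
    then have "char_vec z = char_vec x \<or> char_vec z = char_vec y" using u(3) by auto
    then show ?thesis using inj_char_vec by (auto dest: injD)
  next
    case u01: False
    text \<open>A coordinate where x and y differ gets the value u or 1 - u, which is not 0 or 1.\<close>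
    obtain e where e: "(e \<in> x) \<noteq> (e \<in> y)" using False by blast
    have "char_vec z e = (1 - u) * char_vec x e + u * char_vec y e"
      using u(3) by (metis plus_fun_apply scaleR_fun_apply real_scaleR_def)
    then show ?thesis using e u u01 by (auto simp: char_vec_def split: if_splits)
  qed
qed

lemma PT_edges_subset_Pow:
  assumes "2 \<le> n" "v \<in> PT n"
  shows "v \<subseteq> Pow {1..n}"
proof
  fix \<epsilon> assume "\<epsilon> \<in> v"
  moreover obtain U where "U \<subseteq> {2..<n}" "v = tour_edges (pyr_seq n U)"
    using assms PT_eq_pyr_seq[of n] by auto
  ultimately show "\<epsilon> \<in> Pow {1..n}" using mem_tour_edges_pyr_seq assms(1) by fastforce
qed

lemma finite_PT: "2 \<le> n \<Longrightarrow> finite (PT n)"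
  by (simp add: PT_eq_pyr_seq)

lemma switch_cover_switches:
  assumes n3: "3 \<le> n" and U: "U \<subseteq> {2..<n}" and V: "V \<subseteq> {2..<n}" and W: "W \<subseteq> {2..<n}"
    and sub: "tour_edges (pyr_seq n W) \<subseteq> tour_edges (pyr_seq n U) \<union> tour_edges (pyr_seq n V)"
  shows "switch_cover n (switches n U) (switches n V) (switches n W)"
proof
  fix a b assume ab: "1 \<le> a" "a < b" "b \<le> n" and edge: "switch_edge n (switches n W) a b"
  have n2: "2 \<le> n" using n3 by linarith
  from edge have "{a, b} \<in> tour_edges (pyr_seq n U) \<union> tour_edges (pyr_seq n V)"
    using sub doubleton_mem_tour_edges_pyr_seq[OF W n2 ab] by blast
  then show "switch_edge n (switches n U) a b \<or> switch_edge n (switches n V) a b"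
    using doubleton_mem_tour_edges_pyr_seq[OF U n2 ab] doubleton_mem_tour_edges_pyr_seq[OF V n2 ab]
    by blast
qed (use n3 in \<open>simp_all add: colour_switch_def\<close>)

lemma switches_xor:
  assumes "1 \<le> k" "k \<le> n - 1"
  shows "switches n {c \<in> {2..<n}. (c \<in> U) \<noteq> ((c \<in> V) \<noteq> (c \<in> W))} k \<longleftrightarrow>
    (switches n U k \<noteq> (switches n V k \<noteq> switches n W k))"
proof (cases "k = 1 \<or> k = n - 1")
  case False
  then have "k \<in> {2..<n}" "Suc k \<in> {2..<n}" using assms by auto
  then show ?thesis using False unfolding colour_switch_def by auto
qed (auto simp: colour_switch_def)

lemma char_vec_exchange:
  assumes n3: "3 \<le> n" and U: "U \<subseteq> {2..<n}" and V: "V \<subseteq> {2..<n}" and W: "W \<subseteq> {2..<n}"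
    and sub: "tour_edges (pyr_seq n W) \<subseteq> tour_edges (pyr_seq n U) \<union> tour_edges (pyr_seq n V)"
  defines "G \<equiv> {c \<in> {2..<n}. (c \<in> U) \<noteq> ((c \<in> V) \<noteq> (c \<in> W))}"
  shows "char_vec (tour_edges (pyr_seq n U)) + char_vec (tour_edges (pyr_seq n V)) =
         char_vec (tour_edges (pyr_seq n W)) + char_vec (tour_edges (pyr_seq n G))"
proof
  fix \<epsilon>
  have n2: "2 \<le> n" using n3 by linarith
  have G: "G \<subseteq> {2..<n}" unfolding G_def by blast
  interpret switch_cover n "switches n U" "switches n V" "switches n W"
    by (rule switch_cover_switches[OF assms(1-5)])
  show "(char_vec (tour_edges (pyr_seq n U)) + char_vec (tour_edges (pyr_seq n V))) \<epsilon> =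
        (char_vec (tour_edges (pyr_seq n W)) + char_vec (tour_edges (pyr_seq n G))) \<epsilon>"
  proof (cases "\<exists>a b. \<epsilon> = {a, b} \<and> 1 \<le> a \<and> a < b \<and> b \<le> n")
    case True
    then obtain a b where ab: "\<epsilon> = {a, b}" "1 \<le> a" "a < b" "b \<le> n" by blast
    show ?thesis
      unfolding plus_fun_apply char_vec_def ab(1)
        doubleton_mem_tour_edges_pyr_seq[OF U n2 ab(2-4)] doubleton_mem_tour_edges_pyr_seq[OF V n2 ab(2-4)]
        doubleton_mem_tour_edges_pyr_seq[OF W n2 ab(2-4)] doubleton_mem_tour_edges_pyr_seq[OF G n2 ab(2-4)]
      by (rule switch_edge_exchange[OF _ ab(2-4)]) (unfold G_def, rule switches_xor)
  next
    case False
    then have "\<epsilon> \<notin> tour_edges (pyr_seq n X)" if "X \<subseteq> {2..<n}" for X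
      using mem_tour_edges_pyr_seq[OF that n2] by blast
    then show ?thesis using U V W G by (simp add: char_vec_def)
  qed
qed

lemma PT_exchange:
  assumes "3 \<le> n" "x \<in> PT n" "y \<in> PT n" "z \<in> PT n" "z \<subseteq> x \<union> y"
  obtains w where "w \<in> PT n" "char_vec x + char_vec y = char_vec z + char_vec w"
proof -
  have n2: "2 \<le> n" using assms(1) by linarith
  obtain U V W where UVW: "U \<subseteq> {2..<n}" "V \<subseteq> {2..<n}" "W \<subseteq> {2..<n}" and
    xyz: "x = tour_edges (pyr_seq n U)" "y = tour_edges (pyr_seq n V)" "z = tour_edges (pyr_seq n W)"
    using assms(2-4) unfolding PT_eq_pyr_seq[OF n2] by blast
  define G where "G = {c \<in> {2..<n}. (c \<in> U) \<noteq> ((c \<in> V) \<noteq> (c \<in> W))}"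
  have "tour_edges (pyr_seq n G) \<in> PT n" unfolding PT_eq_pyr_seq[OF n2] G_def by blast
  moreover have "char_vec x + char_vec y = char_vec z + char_vec (tour_edges (pyr_seq n G))"
    unfolding xyz G_def using char_vec_exchange[OF assms(1) UVW] assms(5) xyz by blast
  ultimately show ?thesis by (rule that)
qed

lemma closed_segment_face_of_PYR:
  assumes n2: "2 \<le> n" and x: "x \<in> PT n" and y: "y \<in> PT n"
    and only_xy: "\<And>z. z \<in> PT n \<Longrightarrow> z \<subseteq> x \<union> y \<Longrightarrow> z = x \<or> z = y"
  shows "closed_segment (char_vec x) (char_vec y) face_of PYR n"
proof -
  define Q where "Q = Pow {1..n} - (x \<union> y)"
  text \<open>The number of edges outside x and y, a linear functional vanishing on PYR n exactly
    along the segment.\<close>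
  define f where "f p = (\<Sum>e\<in>Q. p e)" for p :: "nat set \<Rightarrow> real"
  have "linear f" unfolding f_def
    by (intro linear_compose_sum ballI) (simp add: linearI scaleR_fun_def)
  moreover have "f (char_vec v) = 0" if "v = x \<or> v = y" for v
    using that unfolding f_def Q_def char_vec_def by auto
  moreover have "0 < f s" if s: "s \<in> char_vec ` PT n - {char_vec x, char_vec y}" for s
  proof -
    obtain v where v: "v \<in> PT n" "s = char_vec v" "v \<noteq> x" "v \<noteq> y" using s by blast
    then have "\<not> v \<subseteq> x \<union> y" using only_xy by blast
    then obtain e where "e \<in> v" "e \<notin> x \<union> y" by blast
    moreover have "v \<subseteq> Pow {1..n}" by (rule PT_edges_subset_Pow[OF n2 v(1)])
    ultimately have "e \<in> v" "e \<in> Q" unfolding Q_def by blast+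
    then show ?thesis unfolding f_def v(2)
      by (intro sum_pos2[of Q e]) (simp_all add: Q_def char_vec_def)
  qed
  ultimately have "convex hull {char_vec x, char_vec y} face_of convex hull (char_vec ` PT n)"
    using x y finite_PT[OF n2] by (intro face_of_convex_hull_linear_zero[where f = f]) auto
  then show ?thesis by (simp add: PYR_def segment_convex_hull)
qed

lemma char_vec_mem_PYR: "v \<in> PT n \<Longrightarrow> char_vec v \<in> PYR n"
  unfolding PYR_def by (rule hull_inc) blast

lemma closed_segment_not_face_of_PYR:
  assumes "3 \<le> n" "x \<in> PT n" "y \<in> PT n" "z \<in> PT n" "z \<noteq> x" "z \<noteq> y" "z \<subseteq> x \<union> y"
  shows "\<not> closed_segment (char_vec x) (char_vec y) face_of PYR n"
proof
  assume face: "closed_segment (char_vec x) (char_vec y) face_of PYR n"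
  obtain w where "w \<in> PT n" "char_vec x + char_vec y = char_vec z + char_vec w"
    using PT_exchange[OF assms(1-4,7)] .
  then have "char_vec z \<in> closed_segment (char_vec x) (char_vec y)"
    using closed_segment_face_of_sum_eq[OF face] char_vec_mem_PYR assms(4) by blast
  then show False using char_vec_in_closed_segment assms(5,6) by fast
qed

theorem lemma1:
  fixes n :: nat and x y :: "nat set set"
  assumes "n \<ge> 4" and "x \<in> PT n" and "y \<in> PT n" and "x \<noteq> y"
  shows "\<not> (closed_segment (char_vec x) (char_vec y) face_of PYR n) \<longleftrightarrow>
         (\<exists>z \<in> PT n. z \<noteq> x \<and> z \<noteq> y \<and> z \<subseteq> x \<union> y)"
proof \<comment> \<open>neither direction needs x \<noteq> y\<close>
  assume "\<not> closed_segment (char_vec x) (char_vec y) face_of PYR n"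
  moreover have "2 \<le> n" using assms(1) by linarith
  ultimately show "\<exists>z \<in> PT n. z \<noteq> x \<and> z \<noteq> y \<and> z \<subseteq> x \<union> y"
    using closed_segment_face_of_PYR[of n x y] assms(2,3) by blast
next
  assume "\<exists>z \<in> PT n. z \<noteq> x \<and> z \<noteq> y \<and> z \<subseteq> x \<union> y"
  moreover have "3 \<le> n" using assms(1) by linarith
  ultimately show "\<not> closed_segment (char_vec x) (char_vec y) face_of PYR n"
    using closed_segment_not_face_of_PYR[of n x y] assms(2,3) by blast
qed

end
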